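(* For all integers $n,A\ge1$ and $D\ge0$, and every sufficiently large $K>1$, there exist $K_1\le K_2\le\dots\le K_{D+1}=K$ with $K_{j+1}\sim_{n,j}K_j^{A+1}$ (comparable up to multiplicative constants independent of $K$) such that, for every normalized polynomial $P$ of degree at most $D$ in $n$ real variables with real coefficients, there exist multiindices $\alpha_D<\alpha_{D-1}<\dots<\alpha_1$ with $|\alpha_j|=D-j$ such that $$\{x:|P(x)|<1/K_{D+1}\}\cap B(0,1)\subseteq\bigcup_{j=1}^D N_{1/K_j^A}\Big(Z_{\partial^{\alpha_j}P}\cap\{|\nabla\partial^{\alpha_j}P|\ge1/K_j\}\Big).$$
   Context: A polynomial is normalized if the $\ell^1$ sum of the absolute values of its coefficients equals $1$. $Z_Q=\{x\in\mathbb{R}^n:Q(x)=0\}$. $N_\sigma(E)$ is the $\sigma$-neighborhood of $E$. For multiindices, $\alpha<\beta$ means $\alpha\le\beta$ componentwise and $\alpha\ne\beta$; $\partial^\alpha$ is the corresponding partial derivative. *)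

theory Defs
  imports "HOL-Analysis.Analysis"
begin

text \<open>Real polynomials in n variables (n = CARD('n)), represented by their
coefficient function on multiindices 'n \<Rightarrow> nat (finitely supported).
Multiindices are ordered by the pointwise (library) order on functions,
so alpha < beta means alpha \<le> beta componentwise and alpha \<noteq> beta.\<close>

type_synonym 'n mpoly_coeffs = "('n \<Rightarrow> nat) \<Rightarrow> real"

definition mindex_size :: "('n::finite \<Rightarrow> nat) \<Rightarrow> nat" where
  "mindex_size \<alpha> = (\<Sum>i\<in>UNIV. \<alpha> i)"

definition is_mpoly :: "'n mpoly_coeffs \<Rightarrow> bool" where
  "is_mpoly c \<longleftrightarrow> finite {\<alpha>. c \<alpha> \<noteq> 0}"

definition mpoly_deg_le :: "'n::finite mpoly_coeffs \<Rightarrow> nat \<Rightarrow> bool" where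
  "mpoly_deg_le c D \<longleftrightarrow> (\<forall>\<alpha>. c \<alpha> \<noteq> 0 \<longrightarrow> mindex_size \<alpha> \<le> D)"

definition mpoly_eval :: "'n::finite mpoly_coeffs \<Rightarrow> real ^ 'n \<Rightarrow> real" where
  "mpoly_eval c x = (\<Sum>\<alpha> | c \<alpha> \<noteq> 0. c \<alpha> * (\<Prod>i\<in>UNIV. (x $ i) ^ (\<alpha> i)))"

definition mpoly_l1 :: "'n mpoly_coeffs \<Rightarrow> real" where
  "mpoly_l1 c = (\<Sum>\<alpha> | c \<alpha> \<noteq> 0. \<bar>c \<alpha>\<bar>)"

definition normalized :: "'n mpoly_coeffs \<Rightarrow> bool" where
  "normalized c \<longleftrightarrow> mpoly_l1 c = 1"

text \<open>Partial derivative \<partial>^beta: d^beta x^(gamma+beta) = (gamma+beta)!/gamma! x^gamma.\<close>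
definition mpoly_pderiv :: "('n::finite \<Rightarrow> nat) \<Rightarrow> 'n mpoly_coeffs \<Rightarrow> 'n mpoly_coeffs" where
  "mpoly_pderiv \<beta> c = (\<lambda>\<gamma>. c (\<lambda>i. \<gamma> i + \<beta> i) *
       (\<Prod>i\<in>UNIV. pochhammer (real (\<gamma> i) + 1) (\<beta> i)))"

definition unit_mindex :: "'n \<Rightarrow> ('n \<Rightarrow> nat)" where
  "unit_mindex i = (\<lambda>k. if k = i then 1 else 0)"

definition mpoly_grad :: "'n::finite mpoly_coeffs \<Rightarrow> real ^ 'n \<Rightarrow> real ^ 'n" where
  "mpoly_grad c x = (\<chi> i. mpoly_eval (mpoly_pderiv (unit_mindex i) c) x)"

definition zero_set :: "'n::finite mpoly_coeffs \<Rightarrow> (real ^ 'n) set" where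
  "zero_set c = {x. mpoly_eval c x = 0}"

definition nbhd :: "real \<Rightarrow> 'a::metric_space set \<Rightarrow> 'a set" where
  "nbhd \<sigma> E = {x. \<exists>y\<in>E. dist x y < \<sigma>}"

end

theory Submission
  imports Defs
begin

text \<open>Some derivative \<open>\<partial>\<^sup>\<beta>P\<close> with \<open>|\<beta>| \<le> D\<close> is bounded below on the unit ball by a
constant \<open>\<kappa>\<close> depending only on \<open>n\<close> and \<open>D\<close>: choose \<open>\<beta>\<close> of maximal size among the
multiindices whose coefficient exceeds \<open>R^-(|\<beta>|+1)\<close>; after differentiating, the constant
term of \<open>\<partial>\<^sup>\<beta>P\<close> dominates all other terms. Join \<open>0\<close> to \<open>\<beta>\<close> by a chain
\<open>\<delta>_0 < \<delta>_1 < \<dots>\<close> adding one unit multiindex at a time, and put \<open>\<alpha>_j = \<delta>_(D-j)\<close>.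
If a point \<open>x\<close> of the sublevel set were not covered, induction along the chain would give
\<open>|\<partial>^(\<delta>_s)P(x)| < G / K_(D+1-s)\<close>: were the next derivative \<open>\<partial>_i \<partial>^(\<delta>_s)P\<close> large at
\<open>x\<close>, the mean value and intermediate value theorems on the \<open>i\<close>-th coordinate line through
\<open>x\<close> would yield a zero of \<open>\<partial>^(\<delta>_s)P\<close> within \<open>1/(2K^A)\<close> of \<open>x\<close> at which the gradient is
still at least \<open>1/K\<close>, covering \<open>x\<close>. At \<open>s = |\<beta>|\<close> this contradicts the lower bound,
because \<open>K_1 \<ge> G/\<kappa>\<close>.\<close>

section \<open>Zeros of a real function with large derivative\<close>

lemma increment_ge_of_derivative_ge:
  fixes f f' :: "real \<Rightarrow> real"
  assumes "a \<le> b"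
    and der: "\<And>s. (f has_real_derivative f' s) (at s)"
    and bound: "\<And>s. a \<le> s \<Longrightarrow> s \<le> b \<Longrightarrow> h \<le> f' s"
  shows "(b - a) * h \<le> f b - f a"
proof (cases "a = b")
  case False
  then obtain z where "a < z" "z < b" "f b - f a = (b - a) * f' z"
    using MVT2[of a b f f'] der assms(1) by auto
  then show ?thesis
    using bound[of z] by (simp add: mult_left_mono)
qed simp

lemma zero_near_of_derivative_ge:
  fixes f f' :: "real \<Rightarrow> real"
  assumes der: "\<And>s. (f has_real_derivative f' s) (at s)"
    and "0 \<le> r" and f0: "\<bar>f 0\<bar> < r * h"
    and bound: "\<And>s. \<bar>s\<bar> \<le> r \<Longrightarrow> h \<le> f' s"
  shows "\<exists>t. \<bar>t\<bar> \<le> r \<and> f t = 0"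
proof -
  have "r * h \<le> f r - f 0" "r * h \<le> f 0 - f (- r)"
    using increment_ge_of_derivative_ge[OF _ der, of 0 r h]
      increment_ge_of_derivative_ge[OF _ der, of "- r" 0 h] \<open>0 \<le> r\<close> bound
    by auto
  then have "f (- r) \<le> 0" "0 \<le> f r"
    using f0 by linarith+
  then obtain t where "- r \<le> t" "t \<le> r" "f t = 0"
    using IVT[of f "- r" 0 r] DERIV_isCont[OF der] \<open>0 \<le> r\<close> by auto
  then show ?thesis
    by (intro exI[of _ t]) auto
qed

lemma zero_near_of_derivative_large:
  fixes f f' :: "real \<Rightarrow> real"
  assumes der: "\<And>s. (f has_real_derivative f' s) (at s)"
    and "0 \<le> r" and f0: "\<bar>f 0\<bar> < r * h"
    and close: "\<And>s. \<bar>s\<bar> \<le> r \<Longrightarrow> \<bar>f' s - f' 0\<bar> \<le> \<bar>f' 0\<bar> - h"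
  shows "\<exists>t. \<bar>t\<bar> \<le> r \<and> f t = 0 \<and> h \<le> \<bar>f' t\<bar>"
proof (cases "0 \<le> f' 0")
  case True
  then have bound: "h \<le> f' s" if "\<bar>s\<bar> \<le> r" for s
    using close[OF that] by linarith
  then show ?thesis
    using zero_near_of_derivative_ge[OF der \<open>0 \<le> r\<close> f0] by force
next
  case False
  then have bound: "h \<le> - f' s" if "\<bar>s\<bar> \<le> r" for s
    using close[OF that] by linarith
  have "((\<lambda>s. - f s) has_real_derivative - f' s) (at s)" for s
    using der by (rule DERIV_minus)
  then show ?thesis
    using zero_near_of_derivative_ge[of "\<lambda>s. - f s" "\<lambda>s. - f' s" r h] bound \<open>0 \<le> r\<close> f0 by force
qed

section \<open>Partial derivatives, coefficient and Lipschitz bounds\<close>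

lemma mpoly_pderiv_zero [simp]: "mpoly_pderiv (\<lambda>_. 0) c = c"
  by (simp add: mpoly_pderiv_def)

lemma mpoly_pderiv_pderiv:
  "mpoly_pderiv a (mpoly_pderiv b c) = mpoly_pderiv (\<lambda>i. a i + b i) c"
proof
  fix \<gamma> :: "'a \<Rightarrow> nat"
  have "pochhammer (real (\<gamma> i) + 1) (a i + b i) =
      pochhammer (real (\<gamma> i) + 1) (a i) * pochhammer (real (\<gamma> i + a i) + 1) (b i)" for i
    by (simp add: pochhammer_product' add_ac)
  then show "mpoly_pderiv a (mpoly_pderiv b c) \<gamma> = mpoly_pderiv (\<lambda>i. a i + b i) c \<gamma>"
    by (simp add: mpoly_pderiv_def prod.distrib mult_ac add.assoc)
qed

lemma is_mpoly_pderiv: "is_mpoly c \<Longrightarrow> is_mpoly (mpoly_pderiv a c)"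
proof -
  assume "is_mpoly c"
  moreover have "{\<gamma>. mpoly_pderiv a c \<gamma> \<noteq> 0} \<subseteq> (\<lambda>\<gamma> i. \<gamma> i + a i) -` {\<alpha>. c \<alpha> \<noteq> 0}"
    by (auto simp: mpoly_pderiv_def)
  moreover have "inj (\<lambda>\<gamma> i. \<gamma> i + a i)"
    by (auto simp: inj_def fun_eq_iff)
  ultimately show ?thesis
    unfolding is_mpoly_def by (meson finite_subset finite_vimageI)
qed

lemma mindex_size_add: "mindex_size (\<lambda>i. \<gamma> i + a i) = mindex_size \<gamma> + mindex_size a"
  by (simp add: mindex_size_def sum.distrib)

lemma mpoly_deg_le_pderiv: "mpoly_deg_le c D \<Longrightarrow> mpoly_deg_le (mpoly_pderiv a c) D"
  by (auto simp: mpoly_deg_le_def mpoly_pderiv_def mindex_size_add)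

lemma mindex_le_size: "\<alpha> i \<le> mindex_size (\<alpha> :: 'n::finite \<Rightarrow> nat)"
  unfolding mindex_size_def by (rule member_le_sum) auto

lemma finite_mindex_size_le: "finite {\<alpha> :: 'n::finite \<Rightarrow> nat. mindex_size \<alpha> \<le> D}"
proof (rule finite_subset)
  show "{\<alpha> :: 'n \<Rightarrow> nat. mindex_size \<alpha> \<le> D} \<subseteq> PiE UNIV (\<lambda>_. {..D})"
    using mindex_le_size order_trans by (fastforce simp: PiE_def extensional_def)
qed (rule finite_PiE; simp)

definition monomial_eval :: "('n::finite \<Rightarrow> nat) \<Rightarrow> real ^ 'n \<Rightarrow> real" where
  "monomial_eval \<alpha> x = (\<Prod>i\<in>UNIV. (x $ i) ^ \<alpha> i)"

lemma mpoly_eval_deg_le: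
  "mpoly_deg_le c D \<Longrightarrow>
    mpoly_eval c x = (\<Sum>\<alpha> | mindex_size \<alpha> \<le> D. c \<alpha> * monomial_eval \<alpha> x)"
  unfolding mpoly_eval_def monomial_eval_def
  by (rule sum.mono_neutral_left[OF finite_mindex_size_le]) (auto simp: mpoly_deg_le_def)

lemma mpoly_l1_deg_le:
  "mpoly_deg_le c D \<Longrightarrow> mpoly_l1 c = (\<Sum>\<alpha> | mindex_size \<alpha> \<le> D. \<bar>c \<alpha>\<bar>)"
  unfolding mpoly_l1_def
  by (rule sum.mono_neutral_left[OF finite_mindex_size_le]) (auto simp: mpoly_deg_le_def)

lemma pochhammer_le_fact:
  assumes "g + a \<le> D"
  shows "pochhammer (real g + 1) a \<le> fact D"
proof -
  have "(fact (g + a) :: real) = pochhammer 1 g * pochhammer (1 + real g) a"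
    by (simp add: pochhammer_fact pochhammer_product')
  then have "(fact (g + a) :: real) = fact g * pochhammer (real g + 1) a"
    by (simp add: pochhammer_fact add.commute)
  then have "pochhammer (real g + 1) a \<le> fact (g + a)"
    using mult_right_mono[OF fact_ge_1 pochhammer_nonneg[of "real g + 1" a]] by simp
  also have "\<dots> \<le> fact D"
    using assms fact_mono by blast
  finally show ?thesis .
qed

lemma abs_mpoly_pderiv_le:
  fixes c :: "'n::finite mpoly_coeffs"
  assumes "mpoly_deg_le c D"
  shows "\<bar>mpoly_pderiv a c \<gamma>\<bar> \<le> fact D ^ CARD('n) * \<bar>c (\<lambda>i. \<gamma> i + a i)\<bar>"
proof (cases "c (\<lambda>i. \<gamma> i + a i) = 0")
  case False
  then have "mindex_size (\<lambda>i. \<gamma> i + a i) \<le> D"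
    using assms by (auto simp: mpoly_deg_le_def)
  then have "\<gamma> i + a i \<le> D" for i
    using mindex_le_size[of "\<lambda>i. \<gamma> i + a i" i] by simp
  then have "(\<Prod>i\<in>UNIV. pochhammer (real (\<gamma> i) + 1) (a i)) \<le> (\<Prod>i\<in>(UNIV::'n set). fact D)"
    by (intro prod_mono) (simp add: pochhammer_nonneg pochhammer_le_fact)
  then have "\<bar>c (\<lambda>i. \<gamma> i + a i)\<bar> * (\<Prod>i\<in>UNIV. pochhammer (real (\<gamma> i) + 1) (a i))
      \<le> \<bar>c (\<lambda>i. \<gamma> i + a i)\<bar> * fact D ^ CARD('n)"
    by (simp add: mult_left_mono)
  then show ?thesis
    by (simp add: mpoly_pderiv_def abs_mult mult.commute prod_nonneg pochhammer_nonneg)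
qed (simp add: mpoly_pderiv_def)

lemma mpoly_l1_nonneg: "0 \<le> mpoly_l1 c"
  by (simp add: mpoly_l1_def sum_nonneg)

lemma mpoly_l1_pderiv_le:
  fixes c :: "'n::finite mpoly_coeffs"
  assumes "mpoly_deg_le c D" "is_mpoly c"
  shows "mpoly_l1 (mpoly_pderiv a c) \<le> fact D ^ CARD('n) * mpoly_l1 c"
proof -
  let ?T = "{\<gamma>. mpoly_pderiv a c \<gamma> \<noteq> 0}"
  let ?shift = "\<lambda>\<gamma>::'n \<Rightarrow> nat. \<lambda>i. \<gamma> i + a i"
  have "mpoly_l1 (mpoly_pderiv a c) \<le> (\<Sum>\<gamma>\<in>?T. fact D ^ CARD('n) * \<bar>c (?shift \<gamma>)\<bar>)"
    unfolding mpoly_l1_def by (rule sum_mono) (rule abs_mpoly_pderiv_le[OF assms(1)])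
  also have "\<dots> = fact D ^ CARD('n) * (\<Sum>\<beta>\<in>?shift ` ?T. \<bar>c \<beta>\<bar>)"
    by (simp add: sum_distrib_left sum.reindex inj_on_def fun_eq_iff)
  also have "\<dots> \<le> fact D ^ CARD('n) * mpoly_l1 c"
    unfolding mpoly_l1_def using assms(2)
    by (intro mult_left_mono sum_mono2) (auto simp: is_mpoly_def mpoly_pderiv_def)
  finally show ?thesis .
qed

lemma abs_monomial_eval_le_1:
  assumes "norm (x :: real ^ 'n::finite) \<le> 1"
  shows "\<bar>monomial_eval \<gamma> x\<bar> \<le> 1"
  unfolding monomial_eval_def abs_prod power_abs
proof (rule prod_le_1)
  fix i
  have "\<bar>x $ i\<bar> \<le> 1"
    using component_le_norm_cart[of x i] assms by linarith
  then show "0 \<le> \<bar>x $ i\<bar> ^ \<gamma> i \<and> \<bar>x $ i\<bar> ^ \<gamma> i \<le> 1"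
    by (simp add: power_le_one)
qed

lemma monomial_eval_lipschitz:
  assumes "mindex_size \<alpha> \<le> D"
  shows "(2 ^ D * real D)-lipschitz_on (cball 0 2) (monomial_eval \<alpha> :: real ^ 'n::finite \<Rightarrow> real)"
proof (rule lipschitz_onI)
  fix y z :: "real ^ 'n"
  assume "y \<in> cball 0 2" "z \<in> cball 0 2"
  then have half_le: "\<bar>y $ i / 2\<bar> \<le> 1" "\<bar>z $ i / 2\<bar> \<le> 1" for i
    using component_le_norm_cart[of y i] component_le_norm_cart[of z i] by auto
  have scale: "monomial_eval \<alpha> w = 2 ^ mindex_size \<alpha> * (\<Prod>i\<in>UNIV. (w $ i / 2) ^ \<alpha> i)"
    for w :: "real ^ 'n"
  proof -
    have "2 ^ mindex_size \<alpha> * (\<Prod>i\<in>UNIV. (w $ i / 2) ^ \<alpha> i)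
        = (\<Prod>i\<in>UNIV. (2::real) ^ \<alpha> i * (w $ i / 2) ^ \<alpha> i)"
      by (simp add: mindex_size_def power_sum prod.distrib)
    also have "\<dots> = monomial_eval \<alpha> w"
      unfolding monomial_eval_def by (rule prod.cong) (auto simp flip: power_mult_distrib)
    finally show ?thesis ..
  qed
  have "\<bar>(\<Prod>i\<in>UNIV. (y $ i / 2) ^ \<alpha> i) - (\<Prod>i\<in>UNIV. (z $ i / 2) ^ \<alpha> i)\<bar>
      \<le> (\<Sum>i\<in>UNIV. \<bar>(y $ i / 2) ^ \<alpha> i - (z $ i / 2) ^ \<alpha> i\<bar>)"
    using norm_prod_diff[of UNIV "\<lambda>i. (y $ i / 2) ^ \<alpha> i" "\<lambda>i. (z $ i / 2) ^ \<alpha> i"] half_le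
    by (simp add: power_le_one power_abs)
  also have "\<dots> \<le> (\<Sum>i\<in>UNIV. real (\<alpha> i) * (dist y z / 2))"
  proof (rule sum_mono)
    fix i
    have "\<bar>(y $ i / 2) ^ \<alpha> i - (z $ i / 2) ^ \<alpha> i\<bar> \<le> real (\<alpha> i) * \<bar>y $ i / 2 - z $ i / 2\<bar>"
      using norm_power_diff[of "y $ i / 2" "z $ i / 2" "\<alpha> i"] half_le[of i] by simp
    also have "\<bar>y $ i / 2 - z $ i / 2\<bar> = \<bar>(y - z) $ i\<bar> / 2"
      by (simp flip: diff_divide_distrib)
    also have "\<dots> \<le> dist y z / 2"
      using component_le_norm_cart[of "y - z" i] by (simp add: dist_norm)
    finally show "\<bar>(y $ i / 2) ^ \<alpha> i - (z $ i / 2) ^ \<alpha> i\<bar> \<le> real (\<alpha> i) * (dist y z / 2)"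
      by (simp add: mult_left_mono)
  qed
  also have "\<dots> = real (mindex_size \<alpha>) * (dist y z / 2)"
    by (simp add: mindex_size_def sum_distrib_right)
  finally have "dist (monomial_eval \<alpha> y) (monomial_eval \<alpha> z)
      \<le> 2 ^ mindex_size \<alpha> * (real (mindex_size \<alpha>) * (dist y z / 2))"
    by (simp add: dist_real_def scale abs_mult mult_left_mono flip: right_diff_distrib)
  also have "\<dots> \<le> 2 ^ D * (real D * dist y z)"
    using assms by (intro mult_mono) (auto simp: power_increasing mult_mono)
  finally show "dist (monomial_eval \<alpha> y) (monomial_eval \<alpha> z) \<le> 2 ^ D * real D * dist y z"
    by (simp add: mult.assoc)
qed simp

lemma mpoly_eval_lipschitz:
  fixes c :: "'n::finite mpoly_coeffs"
  assumes "mpoly_deg_le c D"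
  shows "(mpoly_l1 c * (2 ^ D * real D))-lipschitz_on (cball 0 2) (mpoly_eval c)"
proof (rule lipschitz_onI)
  let ?S = "{\<alpha> :: 'n \<Rightarrow> nat. mindex_size \<alpha> \<le> D}"
  fix y z :: "real ^ 'n"
  assume yz: "y \<in> cball 0 2" "z \<in> cball 0 2"
  have "dist (mpoly_eval c y) (mpoly_eval c z)
      = \<bar>\<Sum>\<alpha>\<in>?S. c \<alpha> * (monomial_eval \<alpha> y - monomial_eval \<alpha> z)\<bar>"
    by (simp add: dist_real_def mpoly_eval_deg_le[OF assms] right_diff_distrib sum_subtractf)
  also have "\<dots> \<le> (\<Sum>\<alpha>\<in>?S. \<bar>c \<alpha>\<bar> * (2 ^ D * real D * dist y z))"
    using lipschitz_onD[OF monomial_eval_lipschitz yz]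
    by (intro order_trans[OF sum_abs] sum_mono) (auto simp: abs_mult dist_real_def intro: mult_left_mono)
  also have "\<dots> = mpoly_l1 c * (2 ^ D * real D) * dist y z"
    by (simp add: mpoly_l1_deg_le[OF assms] sum_distrib_right mult.assoc)
  finally show "dist (mpoly_eval c y) (mpoly_eval c z) \<le> mpoly_l1 c * (2 ^ D * real D) * dist y z" .
qed (simp add: mpoly_l1_nonneg)

lemma mpoly_eval_pderiv_lipschitz:
  fixes P :: "'n::finite mpoly_coeffs"
  assumes "is_mpoly P" "mpoly_deg_le P D" "normalized P"
  shows "(fact D ^ CARD('n) * (2 ^ D * real D))-lipschitz_on (cball 0 2)
           (mpoly_eval (mpoly_pderiv a P))"
  using mpoly_eval_lipschitz[OF mpoly_deg_le_pderiv[OF assms(2)], of a]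
    mpoly_l1_pderiv_le[OF assms(2,1), of a] assms(3)
  by (elim lipschitz_on_le) (simp add: normalized_def mult_right_mono)

section \<open>Derivative along a coordinate line\<close>

lemma mpoly_eval_eq_sum_monomials:
  "mpoly_eval c x = (\<Sum>\<alpha> | c \<alpha> \<noteq> 0. c \<alpha> * monomial_eval \<alpha> x)"
  by (simp add: mpoly_eval_def monomial_eval_def)

lemma prod_pochhammer_unit_mindex:
  "(\<Prod>i\<in>UNIV. pochhammer (real (\<gamma> i) + 1) (unit_mindex k i)) = real (\<gamma> (k :: 'n::finite)) + 1"
proof -
  have "(\<Prod>i\<in>UNIV - {k}. pochhammer (real (\<gamma> i) + 1) (unit_mindex k i)) = 1"
    by (rule prod.neutral) (auto simp: unit_mindex_def)
  then show ?thesis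
    by (simp add: prod.remove[of UNIV k] unit_mindex_def)
qed

lemma monomial_eval_axis_has_real_derivative:
  "((\<lambda>s. monomial_eval \<alpha> (x + s *\<^sub>R axis k 1)) has_real_derivative
      real (\<alpha> k) * monomial_eval (\<lambda>i. \<alpha> i - unit_mindex k i) (x + t *\<^sub>R axis k 1)) (at t)"
proof -
  have split: "monomial_eval \<beta> (x + s *\<^sub>R axis k 1)
      = (x $ k + s) ^ \<beta> k * (\<Prod>i\<in>UNIV - {k}. (x $ i) ^ \<beta> i)" for \<beta> s
  proof -
    have "(\<Prod>i\<in>UNIV - {k}. ((x + s *\<^sub>R axis k 1) $ i) ^ \<beta> i) = (\<Prod>i\<in>UNIV - {k}. (x $ i) ^ \<beta> i)"
      by (rule prod.cong) (auto simp: axis_def)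
    then show ?thesis
      by (simp add: monomial_eval_def prod.remove[of UNIV k] axis_def)
  qed
  have "(\<Prod>i\<in>UNIV - {k}. (x $ i) ^ (\<alpha> i - unit_mindex k i)) = (\<Prod>i\<in>UNIV - {k}. (x $ i) ^ \<alpha> i)"
    by (rule prod.cong) (auto simp: unit_mindex_def)
  then show ?thesis
    unfolding split by (auto intro!: derivative_eq_intros simp: unit_mindex_def)
qed

lemma mpoly_eval_pderiv_unit_mindex:
  fixes c :: "'n::finite mpoly_coeffs"
  assumes "is_mpoly c"
  shows "mpoly_eval (mpoly_pderiv (unit_mindex k) c) y =
    (\<Sum>\<alpha> | c \<alpha> \<noteq> 0. c \<alpha> * (real (\<alpha> k) * monomial_eval (\<lambda>i. \<alpha> i - unit_mindex k i) y))"
proof -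
  let ?U = "{\<alpha>. c \<alpha> \<noteq> 0 \<and> 1 \<le> \<alpha> k}"
  have "(\<Sum>\<alpha> | c \<alpha> \<noteq> 0. c \<alpha> * (real (\<alpha> k) * monomial_eval (\<lambda>i. \<alpha> i - unit_mindex k i) y))
      = (\<Sum>\<alpha>\<in>?U. c \<alpha> * (real (\<alpha> k) * monomial_eval (\<lambda>i. \<alpha> i - unit_mindex k i) y))"
    using assms unfolding is_mpoly_def by (intro sum.mono_neutral_right) auto
  also have "\<dots> = (\<Sum>\<gamma> | mpoly_pderiv (unit_mindex k) c \<gamma> \<noteq> 0.
      mpoly_pderiv (unit_mindex k) c \<gamma> * monomial_eval \<gamma> y)"
  proof (rule sum.reindex_bij_witness[of _ "\<lambda>\<gamma> i. \<gamma> i + unit_mindex k i" "\<lambda>\<alpha> i. \<alpha> i - unit_mindex k i"])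
    fix \<alpha> assume "\<alpha> \<in> ?U"
    then have shift: "(\<lambda>i. \<alpha> i - unit_mindex k i + unit_mindex k i) = \<alpha>"
      by (auto simp: unit_mindex_def fun_eq_iff)
    then show "(\<lambda>i. \<alpha> i - unit_mindex k i + unit_mindex k i) = \<alpha>" .
    have "mpoly_pderiv (unit_mindex k) c (\<lambda>i. \<alpha> i - unit_mindex k i) = c \<alpha> * real (\<alpha> k)"
      using \<open>\<alpha> \<in> ?U\<close> unfolding mpoly_pderiv_def prod_pochhammer_unit_mindex shift
      by (simp add: unit_mindex_def of_nat_diff)
    then show "mpoly_pderiv (unit_mindex k) c (\<lambda>i. \<alpha> i - unit_mindex k i) *
        monomial_eval (\<lambda>i. \<alpha> i - unit_mindex k i) y
      = c \<alpha> * (real (\<alpha> k) * monomial_eval (\<lambda>i. \<alpha> i - unit_mindex k i) y)"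
      and "(\<lambda>i. \<alpha> i - unit_mindex k i) \<in> {\<gamma>. mpoly_pderiv (unit_mindex k) c \<gamma> \<noteq> 0}"
      using \<open>\<alpha> \<in> ?U\<close> by auto
  qed (auto simp: mpoly_pderiv_def prod_pochhammer_unit_mindex unit_mindex_def fun_eq_iff
      add.commute[of 1] of_nat_diff)
  finally show ?thesis
    by (simp add: mpoly_eval_eq_sum_monomials)
qed

lemma mpoly_eval_axis_has_real_derivative:
  fixes c :: "'n::finite mpoly_coeffs"
  assumes "is_mpoly c"
  shows "((\<lambda>s. mpoly_eval c (x + s *\<^sub>R axis k 1)) has_real_derivative
           mpoly_eval (mpoly_pderiv (unit_mindex k) c) (x + t *\<^sub>R axis k 1)) (at t)"
  unfolding mpoly_eval_eq_sum_monomials[of c] mpoly_eval_pderiv_unit_mindex[OF assms]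
  by (intro DERIV_sum DERIV_cmult monomial_eval_axis_has_real_derivative)

section \<open>Zeros near points where a partial derivative is large\<close>

lemma mpoly_zero_near:
  fixes Q :: "'n::finite mpoly_coeffs"
  assumes "is_mpoly Q"
    and lip: "L-lipschitz_on (cball 0 2) (mpoly_eval (mpoly_pderiv (unit_mindex k) Q))"
    and x: "norm x \<le> 1" and r: "0 \<le> r" "r \<le> 1"
    and Qx: "\<bar>mpoly_eval Q x\<bar> < r * h"
    and Lr: "L * r \<le> \<bar>mpoly_eval (mpoly_pderiv (unit_mindex k) Q) x\<bar> - h"
  shows "\<exists>y. dist x y \<le> r \<and> mpoly_eval Q y = 0 \<and>
           h \<le> \<bar>mpoly_eval (mpoly_pderiv (unit_mindex k) Q) y\<bar>"
proof -
  define p where "p s = x + s *\<^sub>R axis k 1" for s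
  define Q' where "Q' = mpoly_eval (mpoly_pderiv (unit_mindex k) Q)"
  have "\<bar>Q' (p s) - Q' (p 0)\<bar> \<le> \<bar>Q' (p 0)\<bar> - h" if s: "\<bar>s\<bar> \<le> r" for s
  proof -
    have "norm (p s) \<le> norm x + \<bar>s\<bar>"
      unfolding p_def using norm_triangle_ineq[of x "s *\<^sub>R axis k 1"] by simp
    then have "p s \<in> cball 0 2" "p 0 \<in> cball 0 2"
      using x s r by (auto simp: p_def)
    then have "dist (Q' (p s)) (Q' (p 0)) \<le> L * dist (p s) (p 0)"
      unfolding Q'_def by (rule lipschitz_onD[OF lip])
    then have "\<bar>Q' (p s) - Q' (p 0)\<bar> \<le> L * \<bar>s\<bar>"
      by (simp add: p_def dist_real_def dist_norm)
    also have "\<dots> \<le> L * r"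
      using s lipschitz_on_nonneg[OF lip] by (rule mult_left_mono)
    finally show ?thesis
      using Lr by (simp add: Q'_def p_def)
  qed
  moreover have "((\<lambda>s. mpoly_eval Q (p s)) has_real_derivative Q' (p s)) (at s)" for s
    unfolding p_def Q'_def by (rule mpoly_eval_axis_has_real_derivative[OF assms(1)])
  ultimately obtain t where "\<bar>t\<bar> \<le> r" "mpoly_eval Q (p t) = 0" "h \<le> \<bar>Q' (p t)\<bar>"
    using zero_near_of_derivative_large[of "\<lambda>s. mpoly_eval Q (p s)" "\<lambda>s. Q' (p s)" r h] r Qx
    by (auto simp: p_def)
  then show ?thesis
    by (intro exI[of _ "p t"]) (simp add: p_def Q'_def dist_norm)
qed

lemma small_partial_or_near_zero_set:
  fixes Q :: "'n::finite mpoly_coeffs" and K K' :: real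
  assumes "is_mpoly Q"
    and lip: "L-lipschitz_on (cball 0 2) (mpoly_eval (mpoly_pderiv (unit_mindex k) Q))"
    and G: "L + 1 \<le> G" and A: "1 \<le> A" and K: "1 \<le> K" and K': "4 * G * K ^ (A + 1) \<le> K'"
    and x: "norm x \<le> 1" and Qx: "\<bar>mpoly_eval Q x\<bar> < G / K'"
  shows "\<bar>mpoly_eval (mpoly_pderiv (unit_mindex k) Q) x\<bar> < G / K \<or>
    x \<in> nbhd (1 / K ^ A) (zero_set Q \<inter> {y. 1 / K \<le> norm (mpoly_grad Q y)})"
proof (cases "\<bar>mpoly_eval (mpoly_pderiv (unit_mindex k) Q) x\<bar> < G / K")
  case False
  let ?Q' = "mpoly_eval (mpoly_pderiv (unit_mindex k) Q)"
  from False have Q'x: "G / K \<le> \<bar>?Q' x\<bar>"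
    by simp
  have L: "0 \<le> L"
    using lipschitz_on_nonneg[OF lip] .
  have KA: "K \<le> K ^ A"
    using K A by (metis power_increasing power_one_right)
  define r where "r = 1 / (2 * K ^ A)"
  have r: "0 \<le> r" "r \<le> 1" "r \<le> 1 / K" "r < 1 / K ^ A"
    using K KA by (auto simp: r_def frac_le field_simps)
  have pos: "0 < 4 * G * K ^ (A + 1)"
    using G L K by simp
  have "G / K' \<le> G / (4 * G * K ^ (A + 1))"
    using pos G L K' by (intro divide_left_mono) (auto intro: mult_pos_pos)
  also have "\<dots> \<le> r * (1 / K)"
    using G L K by (simp add: r_def power_add frac_le)
  finally have "\<bar>mpoly_eval Q x\<bar> < r * (1 / K)"
    using Qx by linarith
  moreover have "L * r \<le> \<bar>?Q' x\<bar> - 1 / K"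
  proof -
    have "L / K \<le> (G - 1) / K"
      using G K by (simp add: divide_right_mono)
    then have "L * r \<le> (G - 1) / K"
      using mult_left_mono[OF r(3) L] by simp
    then show ?thesis
      using Q'x by (simp add: diff_divide_distrib)
  qed
  ultimately obtain y where y: "dist x y \<le> r" "mpoly_eval Q y = 0" "1 / K \<le> \<bar>?Q' y\<bar>"
    using mpoly_zero_near[OF assms(1) lip x r(1,2)] by blast
  have "\<bar>?Q' y\<bar> \<le> norm (mpoly_grad Q y)"
    using component_le_norm_cart[of "mpoly_grad Q y" k] by (simp add: mpoly_grad_def)
  then show ?thesis
    using y r(4) unfolding nbhd_def zero_set_def by force
qed simp

section \<open>Chains of multiindices\<close>

definition unit_step_chain :: "nat \<Rightarrow> (nat \<Rightarrow> 'n \<Rightarrow> nat) \<Rightarrow> bool" where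
  "unit_step_chain D \<delta> \<longleftrightarrow>
     \<delta> 0 = (\<lambda>_. 0) \<and> (\<forall>s<D. \<exists>i. \<delta> (Suc s) = (\<lambda>j. unit_mindex i j + \<delta> s j))"

lemma mindex_size_unit_mindex [simp]: "mindex_size (unit_mindex (i :: 'n::finite)) = 1"
  by (simp add: mindex_size_def unit_mindex_def)

lemma mindex_size_eq_Suc:
  fixes \<beta> :: "'n::finite \<Rightarrow> nat"
  assumes "mindex_size \<beta> = Suc m"
  shows "\<exists>i \<beta>'. \<beta> = (\<lambda>j. unit_mindex i j + \<beta>' j) \<and> mindex_size \<beta>' = m"
proof -
  obtain i where "0 < \<beta> i"
    using assms by (force simp: mindex_size_def)
  define \<beta>' where "\<beta>' = (\<lambda>j. \<beta> j - unit_mindex i j)"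
  have "\<beta> = (\<lambda>j. unit_mindex i j + \<beta>' j)"
    using \<open>0 < \<beta> i\<close> by (auto simp: \<beta>'_def unit_mindex_def fun_eq_iff)
  moreover from this have "mindex_size \<beta>' = m"
    using assms mindex_size_add[of "unit_mindex i" \<beta>'] by simp
  ultimately show ?thesis
    by blast
qed

lemma unit_step_chain_through:
  fixes \<beta> :: "'n::finite \<Rightarrow> nat"
  shows "mindex_size \<beta> \<le> D \<Longrightarrow> \<exists>\<delta>. unit_step_chain D \<delta> \<and> \<delta> (mindex_size \<beta>) = \<beta>"
proof (induction D arbitrary: \<beta>)
  case 0
  then have "\<beta> = (\<lambda>_. 0)"
    by (auto simp: mindex_size_def fun_eq_iff)
  then show ?case
    by (auto simp: unit_step_chain_def \<open>mindex_size \<beta> \<le> 0\<close>)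
next
  case (Suc D)
  show ?case
  proof (cases "mindex_size \<beta> = Suc D")
    case True
    then obtain i \<beta>' where \<beta>: "\<beta> = (\<lambda>j. unit_mindex i j + \<beta>' j)" "mindex_size \<beta>' = D"
      using mindex_size_eq_Suc by blast
    then obtain \<delta> where "unit_step_chain D \<delta>" "\<delta> D = \<beta>'"
      using Suc.IH[of \<beta>'] by auto
    then have "unit_step_chain (Suc D) (\<delta>(Suc D := \<beta>))"
      using \<beta> by (auto simp: unit_step_chain_def less_Suc_eq)
    then show ?thesis
      using True by auto
  next
    case False
    then obtain \<delta> where \<delta>: "unit_step_chain D \<delta>" "\<delta> (mindex_size \<beta>) = \<beta>"
      using Suc.IH[of \<beta>] Suc.prems by (auto simp: le_Suc_eq)
    fix i :: 'n
    have "unit_step_chain (Suc D) (\<delta>(Suc D := (\<lambda>j. unit_mindex i j + \<delta> D j)))"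
      using \<delta>(1) by (auto simp: unit_step_chain_def less_Suc_eq)
    then show ?thesis
      using False Suc.prems \<delta>(2) by (intro exI) auto
  qed
qed

lemma unit_step_chain_size:
  assumes "unit_step_chain D (\<delta> :: nat \<Rightarrow> 'n::finite \<Rightarrow> nat)"
  shows "s \<le> D \<Longrightarrow> mindex_size (\<delta> s) = s"
proof (induction s)
  case 0
  then show ?case
    using assms by (simp add: unit_step_chain_def mindex_size_def)
next
  case (Suc s)
  then obtain i where "\<delta> (Suc s) = (\<lambda>j. unit_mindex i j + \<delta> s j)"
    using assms by (force simp: unit_step_chain_def)
  then show ?case
    using Suc mindex_size_add[of "unit_mindex i" "\<delta> s"] by simp
qed

lemma unit_step_chain_less:
  assumes "unit_step_chain D \<delta>" "s < D"
  shows "\<delta> s < \<delta> (Suc s)"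
proof -
  obtain i where i: "\<delta> (Suc s) = (\<lambda>j. unit_mindex i j + \<delta> s j)"
    using assms by (auto simp: unit_step_chain_def)
  then have "\<delta> s \<le> \<delta> (Suc s)"
    by (simp add: le_fun_def)
  moreover have "\<delta> s i \<noteq> \<delta> (Suc s) i"
    by (simp add: i unit_mindex_def)
  ultimately show ?thesis
    by (auto simp: less_le)
qed

section \<open>A derivative bounded away from zero\<close>

lemma one_le_card_mindex_size_le: "1 \<le> card {\<alpha> :: 'n::finite \<Rightarrow> nat. mindex_size \<alpha> \<le> D}"
proof -
  have "(\<lambda>_. 0) \<in> {\<alpha> :: 'n \<Rightarrow> nat. mindex_size \<alpha> \<le> D}"
    by (simp add: mindex_size_def)
  then show ?thesis
    using finite_mindex_size_le by (metis One_nat_def Suc_leI card_gt_0_iff empty_iff)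
qed

lemma coeff_above_threshold_exists:
  fixes c :: "'n::finite mpoly_coeffs"
  assumes deg: "mpoly_deg_le c D" and "normalized c"
    and R: "real (card {\<alpha> :: 'n \<Rightarrow> nat. mindex_size \<alpha> \<le> D}) < R"
  shows "\<exists>\<beta>. mindex_size \<beta> \<le> D \<and> 1 / R ^ Suc (mindex_size \<beta>) \<le> \<bar>c \<beta>\<bar>"
proof (rule ccontr)
  let ?S = "{\<alpha> :: 'n \<Rightarrow> nat. mindex_size \<alpha> \<le> D}"
  assume none: "\<not> ?thesis"
  have "1 \<le> R"
    using R one_le_card_mindex_size_le[where 'n='n, of D] by linarith
  have "\<bar>c \<alpha>\<bar> \<le> 1 / R" if "\<alpha> \<in> ?S" for \<alpha>
  proof -
    have "\<bar>c \<alpha>\<bar> < 1 / R ^ Suc (mindex_size \<alpha>)"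
      using none that by force
    also have "\<dots> \<le> 1 / R ^ 1"
      using \<open>1 \<le> R\<close> by (intro divide_left_mono power_increasing) auto
    finally show ?thesis
      by simp
  qed
  then have "mpoly_l1 c \<le> real (card ?S) * (1 / R)"
    unfolding mpoly_l1_deg_le[OF deg] by (rule sum_bounded_above)
  also have "\<dots> < 1"
    using R \<open>1 \<le> R\<close> by simp
  finally show False
    using \<open>normalized c\<close> by (simp add: normalized_def)
qed

lemma dominant_coeff_exists:
  fixes c :: "'n::finite mpoly_coeffs"
  assumes deg: "mpoly_deg_le c D" and "normalized c"
    and R: "real (card {\<alpha> :: 'n \<Rightarrow> nat. mindex_size \<alpha> \<le> D}) < R"
  shows "\<exists>\<beta>. mindex_size \<beta> \<le> D \<and> 1 / R ^ Suc (mindex_size \<beta>) \<le> \<bar>c \<beta>\<bar> \<and>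
           (\<forall>\<alpha>. mindex_size \<beta> < mindex_size \<alpha> \<longrightarrow> \<bar>c \<alpha>\<bar> \<le> 1 / R ^ Suc (Suc (mindex_size \<beta>)))"
proof -
  define \<epsilon> where "\<epsilon> m = 1 / R ^ Suc m" for m
  have "1 < R"
    using R one_le_card_mindex_size_le[where 'n='n, of D] by linarith
  then have \<epsilon>_antimono: "\<epsilon> m' \<le> \<epsilon> m" if "m \<le> m'" for m m'
    unfolding \<epsilon>_def using that by (intro divide_left_mono power_increasing) auto
  define B where "B = {\<beta>. mindex_size \<beta> \<le> D \<and> \<epsilon> (mindex_size \<beta>) \<le> \<bar>c \<beta>\<bar>}"
  obtain \<beta> where "\<beta> \<in> B" and \<beta>_max: "\<And>\<alpha>. \<alpha> \<in> B \<Longrightarrow> mindex_size \<alpha> \<le> mindex_size \<beta>"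
    using coeff_above_threshold_exists[OF assms] ex_has_greatest_nat[of "\<lambda>\<beta>. \<beta> \<in> B" _ mindex_size "Suc D"]
    by (auto simp: B_def \<epsilon>_def)
  have "\<bar>c \<alpha>\<bar> \<le> \<epsilon> (Suc (mindex_size \<beta>))" if "mindex_size \<beta> < mindex_size \<alpha>" for \<alpha>
  proof (cases "mindex_size \<alpha> \<le> D")
    case True
    with \<beta>_max[of \<alpha>] that have "\<bar>c \<alpha>\<bar> < \<epsilon> (mindex_size \<alpha>)"
      by (force simp: B_def)
    then show ?thesis
      using \<epsilon>_antimono[of "Suc (mindex_size \<beta>)" "mindex_size \<alpha>"] that by simp
  next
    case False
    then have "c \<alpha> = 0"
      using deg by (auto simp: mpoly_deg_le_def)
    then show ?thesis
      using \<open>1 < R\<close> by (simp add: \<epsilon>_def)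
  qed
  then show ?thesis
    using \<open>\<beta> \<in> B\<close> by (auto simp: B_def \<epsilon>_def)
qed

lemma abs_mpoly_eval_pderiv_dominant_ge:
  fixes c :: "'n::finite mpoly_coeffs"
  assumes deg: "mpoly_deg_le c D" and x: "norm x \<le> 1" and "0 \<le> \<eta>"
    and small: "\<And>\<alpha>. mindex_size \<beta> < mindex_size \<alpha> \<Longrightarrow> \<bar>c \<alpha>\<bar> \<le> \<eta>"
  shows "\<bar>c \<beta>\<bar> - real (card {\<alpha> :: 'n \<Rightarrow> nat. mindex_size \<alpha> \<le> D}) * (fact D ^ CARD('n) * \<eta>)
           \<le> \<bar>mpoly_eval (mpoly_pderiv \<beta> c) x\<bar>"
proof -
  let ?S = "{\<alpha> :: 'n \<Rightarrow> nat. mindex_size \<alpha> \<le> D}"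
  let ?Q = "mpoly_pderiv \<beta> c"
  have "(\<lambda>_. 0) \<in> ?S"
    by (simp add: mindex_size_def)
  then have eval: "mpoly_eval ?Q x = ?Q (\<lambda>_. 0) * monomial_eval (\<lambda>_. 0) x
      + (\<Sum>\<gamma>\<in>?S - {\<lambda>_. 0}. ?Q \<gamma> * monomial_eval \<gamma> x)"
    unfolding mpoly_eval_deg_le[OF mpoly_deg_le_pderiv[OF deg]]
    by (simp add: sum.remove[OF finite_mindex_size_le])
  have "1 \<le> (\<Prod>i\<in>UNIV. fact (\<beta> i) :: real)"
    by (intro prod_ge_1) auto
  then have lead: "\<bar>c \<beta>\<bar> \<le> \<bar>?Q (\<lambda>_. 0) * monomial_eval (\<lambda>_. 0) x\<bar>"
    by (simp add: mpoly_pderiv_def monomial_eval_def pochhammer_fact abs_mult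
        mult_le_cancel_left1 prod_nonneg)
  have "\<bar>?Q \<gamma> * monomial_eval \<gamma> x\<bar> \<le> fact D ^ CARD('n) * \<eta>" if "\<gamma> \<in> ?S - {\<lambda>_. 0}" for \<gamma>
  proof -
    have "mindex_size \<gamma> \<noteq> 0"
      using that by (auto simp: mindex_size_def fun_eq_iff)
    then have "\<bar>c (\<lambda>i. \<gamma> i + \<beta> i)\<bar> \<le> \<eta>"
      by (intro small) (simp add: mindex_size_add)
    then have "\<bar>?Q \<gamma>\<bar> \<le> fact D ^ CARD('n) * \<eta>"
      using abs_mpoly_pderiv_le[OF deg, of \<beta> \<gamma>] by (meson order_trans mult_left_mono fact_ge_zero
          zero_le_power)
    then have "\<bar>?Q \<gamma>\<bar> * \<bar>monomial_eval \<gamma> x\<bar> \<le> (fact D ^ CARD('n) * \<eta>) * 1"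
      using abs_monomial_eval_le_1[OF x, of \<gamma>] by (intro mult_mono) auto
    then show ?thesis
      by (simp add: abs_mult)
  qed
  then have "\<bar>\<Sum>\<gamma>\<in>?S - {\<lambda>_. 0}. ?Q \<gamma> * monomial_eval \<gamma> x\<bar>
      \<le> real (card (?S - {\<lambda>_. 0})) * (fact D ^ CARD('n) * \<eta>)"
    by (intro order_trans[OF sum_abs] sum_bounded_above)
  also have "\<dots> \<le> real (card ?S) * (fact D ^ CARD('n) * \<eta>)"
    using \<open>0 \<le> \<eta>\<close> finite_mindex_size_le
    by (intro mult_right_mono) (auto intro: card_mono)
  finally show ?thesis
    using eval lead by linarith
qed

lemma uniform_pderiv_lower_bound:
  "\<exists>\<kappa>>0. \<forall>P :: 'n::finite mpoly_coeffs. mpoly_deg_le P D \<and> normalized P \<longrightarrow>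
     (\<exists>\<beta>. mindex_size \<beta> \<le> D \<and> (\<forall>x. norm x \<le> 1 \<longrightarrow> \<kappa> \<le> \<bar>mpoly_eval (mpoly_pderiv \<beta> P) x\<bar>))"
proof -
  define N where "N = real (card {\<alpha> :: 'n \<Rightarrow> nat. mindex_size \<alpha> \<le> D})"
  define F :: real where "F = fact D ^ CARD('n)"
  define R where "R = 2 * N * F + 2"
  have "1 \<le> F" "0 \<le> N"
    by (simp_all add: F_def N_def one_le_power)
  then have "N \<le> N * F"
    using mult_left_mono[of 1 F N] by simp
  then have "N < R" "2 * (N * F) \<le> R" "1 \<le> R"
    using \<open>0 \<le> N\<close> \<open>1 \<le> F\<close> by (auto simp: R_def)
  show ?thesis
  proof (intro exI[of _ "1 / (2 * R ^ Suc D)"] conjI allI impI)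
    show "0 < 1 / (2 * R ^ Suc D)"
      using \<open>1 \<le> R\<close> by simp
    fix P :: "'n mpoly_coeffs"
    assume P: "mpoly_deg_le P D \<and> normalized P"
    then obtain \<beta> where \<beta>: "mindex_size \<beta> \<le> D" "1 / R ^ Suc (mindex_size \<beta>) \<le> \<bar>P \<beta>\<bar>"
      "\<And>\<alpha>. mindex_size \<beta> < mindex_size \<alpha> \<Longrightarrow> \<bar>P \<alpha>\<bar> \<le> 1 / R ^ Suc (Suc (mindex_size \<beta>))"
      using dominant_coeff_exists[of P D R] \<open>N < R\<close> by (auto simp: N_def)
    define \<epsilon> where "\<epsilon> = 1 / R ^ Suc (mindex_size \<beta>)"
    have "1 / (2 * R ^ Suc D) \<le> \<epsilon> / 2"
      using \<beta>(1) \<open>1 \<le> R\<close> by (auto simp: \<epsilon>_def intro!: divide_left_mono power_increasing)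
    also have "\<dots> \<le> \<epsilon> - N * (F * (\<epsilon> / R))"
      using \<open>2 * (N * F) \<le> R\<close> \<open>1 \<le> R\<close> by (simp add: \<epsilon>_def field_simps)
    finally have "1 / (2 * R ^ Suc D) \<le> \<epsilon> - N * (F * (\<epsilon> / R))" .
    moreover have "\<epsilon> - N * (F * (\<epsilon> / R)) \<le> \<bar>mpoly_eval (mpoly_pderiv \<beta> P) x\<bar>" if "norm x \<le> 1" for x
    proof -
      have "\<epsilon> / R = 1 / R ^ Suc (Suc (mindex_size \<beta>))" "0 \<le> \<epsilon> / R"
        using \<open>1 \<le> R\<close> by (simp_all add: \<epsilon>_def)
      then have "\<bar>P \<beta>\<bar> - N * (F * (\<epsilon> / R)) \<le> \<bar>mpoly_eval (mpoly_pderiv \<beta> P) x\<bar>"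
        unfolding N_def F_def using P that \<beta>(3)
        by (intro abs_mpoly_eval_pderiv_dominant_ge) auto
      then show ?thesis
        using \<beta>(2) by (simp add: \<epsilon>_def)
    qed
    ultimately show "\<exists>\<beta>. mindex_size \<beta> \<le> D \<and>
        (\<forall>x. norm x \<le> 1 \<longrightarrow> 1 / (2 * R ^ Suc D) \<le> \<bar>mpoly_eval (mpoly_pderiv \<beta> P) x\<bar>)"
      using \<beta>(1) by force
  qed
qed

section \<open>Covering the sublevel set\<close>

lemma partial_derivatives_along_chain_small:
  fixes P :: "'n::finite mpoly_coeffs" and Ks :: "nat \<Rightarrow> real"
  assumes "is_mpoly P" and A: "1 \<le> A" and G: "L + 1 \<le> G"
    and lip: "\<And>a. L-lipschitz_on (cball 0 2) (mpoly_eval (mpoly_pderiv a P))"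
    and Ks_ge: "\<And>j. j \<in> {1..D+1} \<Longrightarrow> 1 \<le> Ks j"
    and Ks_step: "\<And>j. j \<in> {1..D} \<Longrightarrow> 4 * G * Ks j ^ (A + 1) \<le> Ks (j + 1)"
    and \<delta>: "unit_step_chain D \<delta>"
    and x: "norm x \<le> 1" and Px: "\<bar>mpoly_eval P x\<bar> < 1 / Ks (D + 1)"
    and uncovered: "\<And>j. j \<in> {1..D} \<Longrightarrow> x \<notin> nbhd (1 / Ks j ^ A)
          (zero_set (mpoly_pderiv (\<delta> (D - j)) P) \<inter>
           {y. 1 / Ks j \<le> norm (mpoly_grad (mpoly_pderiv (\<delta> (D - j)) P) y)})"
  shows "s \<le> D \<Longrightarrow> \<bar>mpoly_eval (mpoly_pderiv (\<delta> s) P) x\<bar> < G / Ks (D + 1 - s)"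
proof (induction s)
  case 0
  have "1 / Ks (D + 1) \<le> G / Ks (D + 1)"
    using Ks_ge[of "D + 1"] G lipschitz_on_nonneg[OF lip] by (simp add: divide_right_mono)
  then show ?case
    using Px \<delta> by (simp add: unit_step_chain_def)
next
  case (Suc s)
  then obtain i where i: "\<delta> (Suc s) = (\<lambda>j. unit_mindex i j + \<delta> s j)"
    using \<delta> by (force simp: unit_step_chain_def)
  have j: "D - s \<in> {1..D}" "D + 1 - s = D - s + 1" "D + 1 - Suc s = D - s" "D - (D - s) = s"
    using Suc.prems by auto
  have IH: "\<bar>mpoly_eval (mpoly_pderiv (\<delta> s) P) x\<bar> < G / Ks (D - s + 1)"
    using Suc j(2) by simp
  have lip_i: "L-lipschitz_on (cball 0 2)
      (mpoly_eval (mpoly_pderiv (unit_mindex i) (mpoly_pderiv (\<delta> s) P)))"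
    by (simp add: mpoly_pderiv_pderiv lip)
  have "\<bar>mpoly_eval (mpoly_pderiv (unit_mindex i) (mpoly_pderiv (\<delta> s) P)) x\<bar> < G / Ks (D - s)"
    using small_partial_or_near_zero_set[OF is_mpoly_pderiv[OF \<open>is_mpoly P\<close>] lip_i G A
        Ks_ge[of "D - s"] Ks_step[OF j(1)] x IH] uncovered[OF j(1)] j(1,4)
    by auto
  then show ?case
    using i j(3) by (simp add: mpoly_pderiv_pderiv)
qed

definition sublevel_set_stratified ::
    "nat \<Rightarrow> nat \<Rightarrow> (nat \<Rightarrow> real) \<Rightarrow> 'n::finite mpoly_coeffs \<Rightarrow> bool" where
  "sublevel_set_stratified A D Ks P \<longleftrightarrow>
     (\<exists>\<alpha> :: nat \<Rightarrow> ('n \<Rightarrow> nat).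
        (\<forall>j\<in>{1..D}. mindex_size (\<alpha> j) = D - j) \<and>
        (\<forall>j\<in>{1..<D}. \<alpha> (j + 1) < \<alpha> j) \<and>
        {x. \<bar>mpoly_eval P x\<bar> < 1 / Ks (D + 1)} \<inter> ball 0 1
          \<subseteq> (\<Union>j\<in>{1..D}. nbhd (1 / Ks j ^ A)
                (zero_set (mpoly_pderiv (\<alpha> j) P) \<inter>
                 {x. norm (mpoly_grad (mpoly_pderiv (\<alpha> j) P) x) \<ge> 1 / Ks j})))"

lemma sublevel_set_subset_near_zero_sets:
  fixes P :: "'n::finite mpoly_coeffs" and Ks :: "nat \<Rightarrow> real"
  assumes "is_mpoly P" "1 \<le> A" "L + 1 \<le> G"
    and "\<And>a. L-lipschitz_on (cball 0 2) (mpoly_eval (mpoly_pderiv a P))"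
    and Ks_ge1: "\<And>j. j \<in> {1..D+1} \<Longrightarrow> 1 \<le> Ks j"
    and Ks_step: "\<And>j. j \<in> {1..D} \<Longrightarrow> 4 * G * Ks j ^ (A + 1) \<le> Ks (j + 1)"
    and Ks_ge: "\<And>j. j \<in> {1..D+1} \<Longrightarrow> G \<le> \<kappa> * Ks j"
    and \<delta>: "unit_step_chain D \<delta>" and \<beta>: "mindex_size \<beta> \<le> D" "\<delta> (mindex_size \<beta>) = \<beta>"
    and lower: "\<And>x. norm x \<le> 1 \<Longrightarrow> \<kappa> \<le> \<bar>mpoly_eval (mpoly_pderiv \<beta> P) x\<bar>"
  shows "{x. \<bar>mpoly_eval P x\<bar> < 1 / Ks (D + 1)} \<inter> ball 0 1
      \<subseteq> (\<Union>j\<in>{1..D}. nbhd (1 / Ks j ^ A) (zero_set (mpoly_pderiv (\<delta> (D - j)) P) \<inter>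
           {x. 1 / Ks j \<le> norm (mpoly_grad (mpoly_pderiv (\<delta> (D - j)) P) x)}))"
proof (rule subsetI, rule ccontr)
  fix x
  assume "x \<in> {x. \<bar>mpoly_eval P x\<bar> < 1 / Ks (D + 1)} \<inter> ball 0 1"
    and uncovered: "x \<notin> (\<Union>j\<in>{1..D}. nbhd (1 / Ks j ^ A)
      (zero_set (mpoly_pderiv (\<delta> (D - j)) P) \<inter>
       {x. 1 / Ks j \<le> norm (mpoly_grad (mpoly_pderiv (\<delta> (D - j)) P) x)}))"
  then have x: "norm x \<le> 1" "\<bar>mpoly_eval P x\<bar> < 1 / Ks (D + 1)"
    by auto
  have "\<bar>mpoly_eval (mpoly_pderiv (\<delta> (mindex_size \<beta>)) P) x\<bar> < G / Ks (D + 1 - mindex_size \<beta>)"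
    using uncovered
    by (intro partial_derivatives_along_chain_small[OF assms(1-4) Ks_ge1 Ks_step \<delta> x _ \<beta>(1)]) auto
  then have "\<bar>mpoly_eval (mpoly_pderiv \<beta> P) x\<bar> < G / Ks (D + 1 - mindex_size \<beta>)"
    by (simp only: \<beta>(2))
  also have "\<dots> \<le> \<kappa>"
  proof -
    have "D + 1 - mindex_size \<beta> \<in> {1..D+1}"
      using \<beta>(1) by auto
    then have "1 \<le> Ks (D + 1 - mindex_size \<beta>)" "G \<le> \<kappa> * Ks (D + 1 - mindex_size \<beta>)"
      using Ks_ge1 Ks_ge by blast+
    then show ?thesis
      by (simp add: divide_le_eq mult.commute)
  qed
  finally show False
    using lower[OF x(1)] by simp
qed

lemma sublevel_set_stratifiedI:
  fixes P :: "'n::finite mpoly_coeffs" and Ks :: "nat \<Rightarrow> real"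
  assumes "is_mpoly P" "1 \<le> A" "L + 1 \<le> G"
    and "\<And>a. L-lipschitz_on (cball 0 2) (mpoly_eval (mpoly_pderiv a P))"
    and "\<And>j. j \<in> {1..D+1} \<Longrightarrow> 1 \<le> Ks j"
    and "\<And>j. j \<in> {1..D} \<Longrightarrow> 4 * G * Ks j ^ (A + 1) \<le> Ks (j + 1)"
    and "\<And>j. j \<in> {1..D+1} \<Longrightarrow> G \<le> \<kappa> * Ks j"
    and \<beta>: "mindex_size \<beta> \<le> D"
    and "\<And>x. norm x \<le> 1 \<Longrightarrow> \<kappa> \<le> \<bar>mpoly_eval (mpoly_pderiv \<beta> P) x\<bar>"
  shows "sublevel_set_stratified A D Ks P"
proof -
  obtain \<delta> where \<delta>: "unit_step_chain D \<delta>" "\<delta> (mindex_size \<beta>) = \<beta>"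
    using unit_step_chain_through[OF \<beta>] by blast
  have "mindex_size (\<delta> (D - j)) = D - j" if "j \<in> {1..D}" for j
    using unit_step_chain_size[OF \<delta>(1)] by simp
  moreover have "\<delta> (D - (j + 1)) < \<delta> (D - j)" if "j \<in> {1..<D}" for j
    using unit_step_chain_less[OF \<delta>(1), of "D - (j + 1)"] that by (simp add: Suc_diff_Suc)
  moreover note sublevel_set_subset_near_zero_sets[where P=P and A=A and L=L and G=G and D=D and Ks=Ks
      and \<kappa>=\<kappa> and \<delta>=\<delta> and \<beta>=\<beta>,
      OF assms(1-7) \<delta>(1) \<beta> \<delta>(2) assms(9)]
  ultimately show ?thesis
    unfolding sublevel_set_stratified_def by (intro exI[of _ "\<lambda>j. \<delta> (D - j)"]) auto
qed

section \<open>The scales\<close>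

text \<open>\<open>K\<^sub>j = scale_down C A K (D + 1 - j)\<close> solves \<open>K\<^sub>j\<^sub>+\<^sub>1 = C K\<^sub>j\<^sup>A\<^sup>+\<^sup>1\<close> downwards from
\<open>K\<^sub>D\<^sub>+\<^sub>1 = K\<close>; \<open>scale_up C A T D\<close> is the threshold for \<open>K\<close> above which all \<open>K\<^sub>j \<ge> T\<close>.\<close>

primrec scale_up :: "real \<Rightarrow> nat \<Rightarrow> real \<Rightarrow> nat \<Rightarrow> real" where
  "scale_up C A T 0 = T"
| "scale_up C A T (Suc k) = C * scale_up C A T k ^ Suc A"

primrec scale_down :: "real \<Rightarrow> nat \<Rightarrow> real \<Rightarrow> nat \<Rightarrow> real" where
  "scale_down C A K 0 = K"
| "scale_down C A K (Suc k) = root (Suc A) (scale_down C A K k / C)"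

lemma le_scale_up:
  assumes C: "1 \<le> C" and T: "1 \<le> T"
  shows "T \<le> scale_up C A T k"
proof (induction k)
  case (Suc k)
  let ?x = "scale_up C A T k"
  have "1 \<le> ?x"
    using Suc T by linarith
  then have "?x ^ 1 \<le> ?x ^ Suc A"
    by (intro power_increasing) auto
  also have "\<dots> \<le> C * ?x ^ Suc A"
    using mult_right_mono[OF C, of "?x ^ Suc A"] \<open>1 \<le> ?x\<close> by simp
  finally show ?case
    using Suc by simp
qed simp

lemma scale_up_le_scale_down:
  assumes C: "1 \<le> C" and T: "1 \<le> T" and K: "scale_up C A T D \<le> K"
  shows "k \<le> D \<Longrightarrow> scale_up C A T (D - k) \<le> scale_down C A K k"
proof (induction k)
  case (Suc k)
  let ?y = "scale_up C A T (D - Suc k)"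
  have "D - k = Suc (D - Suc k)"
    using Suc.prems by simp
  then have pow_le: "?y ^ Suc A \<le> scale_down C A K k / C"
    using Suc C by (simp add: pos_le_divide_eq mult.commute)
  have "?y = root (Suc A) (?y ^ Suc A)"
    using le_scale_up[OF C T, of A "D - Suc k"] T by (intro real_root_power_cancel[symmetric]) auto
  also have "\<dots> \<le> root (Suc A) (scale_down C A K k / C)"
    by (rule real_root_le_mono[OF zero_less_Suc pow_le])
  finally show ?case
    by (simp only: scale_down.simps)
qed (use K in simp)

lemma scale_down_Suc_power:
  assumes "0 \<le> scale_down C A K k" "0 < C"
  shows "C * scale_down C A K (Suc k) ^ Suc A = scale_down C A K k"
proof -
  have "scale_down C A K (Suc k) ^ Suc A = scale_down C A K k / C"
    unfolding scale_down.simps using assms by (intro real_root_pow_pos2) auto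
  then show ?thesis
    using assms(2) by simp
qed

lemma scale_sequence_exists:
  fixes C T K :: real
  assumes C: "1 \<le> C" and T: "1 \<le> T" and K: "scale_up C A T D \<le> K"
  shows "\<exists>Ks. Ks (D + 1) = K \<and> (\<forall>j\<in>{1..D+1}. T \<le> Ks j) \<and>
    (\<forall>j\<in>{1..D}. Ks j \<le> Ks (j + 1) \<and> Ks (j + 1) = C * Ks j ^ (A + 1) \<and>
                 Ks j ^ (A + 1) \<le> C * Ks (j + 1))"
proof (intro exI[of _ "\<lambda>j. scale_down C A K (D + 1 - j)"] conjI ballI)
  show T_le: "T \<le> scale_down C A K (D + 1 - j)" if "j \<in> {1..D+1}" for j
  proof -
    have "T \<le> scale_up C A T (D - (D + 1 - j))"
      by (rule le_scale_up[OF C T])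
    also have "\<dots> \<le> scale_down C A K (D + 1 - j)"
      using that by (intro scale_up_le_scale_down[OF C T K]) auto
    finally show ?thesis .
  qed
  fix j
  assume j: "j \<in> {1..D}"
  then have e: "D + 1 - (j + 1) = D - j" "D + 1 - j = Suc (D - j)"
    by auto
  have "0 \<le> scale_down C A K (D - j)"
    using T_le[of "j + 1"] j T e(1) by simp
  then show step: "scale_down C A K (D + 1 - (j + 1)) = C * scale_down C A K (D + 1 - j) ^ (A + 1)"
    unfolding e using scale_down_Suc_power[of C A K "D - j"] C by simp
  let ?x = "scale_down C A K (D + 1 - j)" and ?y = "scale_down C A K (D + 1 - (j + 1))"
  have "1 \<le> ?x"
    using T_le[of j] j T by simp
  have "?x ^ (A + 1) \<le> C * ?x ^ (A + 1)"
    using mult_right_mono[OF C, of "?x ^ (A + 1)"] \<open>1 \<le> ?x\<close> by simp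
  then have pow_le: "?x ^ (A + 1) \<le> ?y"
    using step by simp
  moreover have "?x ^ 1 \<le> ?x ^ (A + 1)"
    using \<open>1 \<le> ?x\<close> by (intro power_increasing) auto
  ultimately show "?x \<le> ?y"
    by simp
  have "1 \<le> ?x ^ (A + 1)"
    using \<open>1 \<le> ?x\<close> by (rule one_le_power)
  then have "?y \<le> C * ?y"
    using mult_right_mono[OF C, of ?y] pow_le by simp
  with pow_le show "?x ^ (A + 1) \<le> C * ?y"
    by linarith
qed simp

lemma stratifying_scales_exist:
  fixes K L G T \<kappa> :: real
  assumes A: "1 \<le> A" and L: "0 \<le> L" and G: "L + 1 \<le> G" and "0 < \<kappa>"
    and T: "1 \<le> T" "G \<le> \<kappa> * T"
    and lower: "\<And>P :: 'n::finite mpoly_coeffs. mpoly_deg_le P D \<and> normalized P \<Longrightarrow>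
      \<exists>\<beta>. mindex_size \<beta> \<le> D \<and> (\<forall>x. norm x \<le> 1 \<longrightarrow> \<kappa> \<le> \<bar>mpoly_eval (mpoly_pderiv \<beta> P) x\<bar>)"
    and lip: "\<And>(P :: 'n mpoly_coeffs) a. is_mpoly P \<Longrightarrow> mpoly_deg_le P D \<Longrightarrow> normalized P \<Longrightarrow>
      L-lipschitz_on (cball 0 2) (mpoly_eval (mpoly_pderiv a P))"
    and K: "scale_up (4 * G) A T D \<le> K"
  shows "\<exists>Ks. Ks (D + 1) = K \<and> 0 < Ks 1 \<and>
    (\<forall>j\<in>{1..D}. Ks j \<le> Ks (j + 1) \<and> Ks (j + 1) \<le> 4 * G * Ks j ^ (A + 1) \<and>
                 Ks j ^ (A + 1) \<le> 4 * G * Ks (j + 1)) \<and>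
    (\<forall>P :: 'n mpoly_coeffs. is_mpoly P \<and> mpoly_deg_le P D \<and> normalized P \<longrightarrow>
       sublevel_set_stratified A D Ks P)"
proof -
  have "1 \<le> 4 * G"
    using L G by simp
  then obtain Ks where Ks: "Ks (D + 1) = K" "\<And>j. j \<in> {1..D+1} \<Longrightarrow> T \<le> Ks j"
    "\<And>j. j \<in> {1..D} \<Longrightarrow> Ks j \<le> Ks (j + 1) \<and> Ks (j + 1) = 4 * G * Ks j ^ (A + 1) \<and>
                           Ks j ^ (A + 1) \<le> 4 * G * Ks (j + 1)"
    using scale_sequence_exists[OF _ T(1) K] by blast
  have Ks_ge: "G \<le> \<kappa> * Ks j" if "j \<in> {1..D+1}" for j
  proof -
    have "\<kappa> * T \<le> \<kappa> * Ks j"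
      using Ks(2)[OF that] \<open>0 < \<kappa>\<close> by simp
    with T(2) show ?thesis
      by linarith
  qed
  have "sublevel_set_stratified A D Ks P"
    if P: "is_mpoly P \<and> mpoly_deg_le P D \<and> normalized P" for P :: "'n mpoly_coeffs"
  proof -
    obtain \<beta> where "mindex_size \<beta> \<le> D"
      "\<And>x. norm x \<le> 1 \<Longrightarrow> \<kappa> \<le> \<bar>mpoly_eval (mpoly_pderiv \<beta> P) x\<bar>"
      using lower P by blast
    with P show ?thesis
      using Ks(2,3) Ks_ge lip A G T(1)
      by (intro sublevel_set_stratifiedI[of P A L G D Ks \<kappa> \<beta>]) (auto intro: order_trans)
  qed
  then show ?thesis
  proof (intro exI[of _ Ks] conjI ballI allI impI)
    show "Ks (D + 1) = K" "0 < Ks 1"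
      using Ks(1) Ks(2)[of 1] T(1) by simp_all
    fix j
    assume "j \<in> {1..D}"
    then have "Ks j \<le> Ks (j + 1)" "Ks (j + 1) = 4 * G * Ks j ^ (A + 1)"
      "Ks j ^ (A + 1) \<le> 4 * G * Ks (j + 1)"
      using Ks(3) by blast+
    then show "Ks j \<le> Ks (j + 1)" "Ks (j + 1) \<le> 4 * G * Ks j ^ (A + 1)"
      "Ks j ^ (A + 1) \<le> 4 * G * Ks (j + 1)"
      by simp_all
  qed
qed

theorem mainTheorem7:
  fixes A D :: nat
  assumes "A \<ge> 1"
  shows "\<exists>C::real. C \<ge> 1 \<and> (\<exists>K0::real. \<forall>K::real. K > max 1 K0 \<longrightarrow>
     (\<exists>Ks :: nat \<Rightarrow> real.
        Ks (D + 1) = K \<and> 0 < Ks 1 \<and>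
        (\<forall>j\<in>{1..D}. Ks j \<le> Ks (j + 1) \<and>
                     Ks (j + 1) \<le> C * Ks j ^ (A + 1) \<and>
                     Ks j ^ (A + 1) \<le> C * Ks (j + 1)) \<and>
        (\<forall>P :: ('n::finite) mpoly_coeffs.
            is_mpoly P \<and> mpoly_deg_le P D \<and> normalized P \<longrightarrow>
            (\<exists>\<alpha> :: nat \<Rightarrow> ('n \<Rightarrow> nat).
                (\<forall>j\<in>{1..D}. mindex_size (\<alpha> j) = D - j) \<and>
                (\<forall>j\<in>{1..<D}. \<alpha> (j + 1) < \<alpha> j) \<and>
                {x. \<bar>mpoly_eval P x\<bar> < 1 / Ks (D + 1)} \<inter> ball 0 1
                  \<subseteq> (\<Union>j\<in>{1..D}. nbhd (1 / Ks j ^ A)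
                        (zero_set (mpoly_pderiv (\<alpha> j) P) \<inter>
                         {x. norm (mpoly_grad (mpoly_pderiv (\<alpha> j) P) x) \<ge> 1 / Ks j}))))))"
proof -
  obtain \<kappa> :: real where "0 < \<kappa>" and lower: "\<And>P :: 'n mpoly_coeffs. mpoly_deg_le P D \<and> normalized P \<Longrightarrow>
      \<exists>\<beta>. mindex_size \<beta> \<le> D \<and> (\<forall>x. norm x \<le> 1 \<longrightarrow> \<kappa> \<le> \<bar>mpoly_eval (mpoly_pderiv \<beta> P) x\<bar>)"
    using uniform_pderiv_lower_bound by blast
  define L :: real where "L = fact D ^ CARD('n) * (2 ^ D * real D)"
  define G where "G = L + 1"
  define T where "T = max 1 (G / \<kappa>)"
  have "G / \<kappa> \<le> T"
    by (simp add: T_def)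
  then have "G \<le> \<kappa> * T"
    using \<open>0 < \<kappa>\<close> by (simp add: pos_divide_le_eq mult.commute)
  have "0 \<le> L" "1 \<le> T"
    by (simp_all add: L_def T_def)
  have lip: "L-lipschitz_on (cball 0 2) (mpoly_eval (mpoly_pderiv a P))"
    if "is_mpoly P" "mpoly_deg_le P D" "normalized P" for P :: "'n mpoly_coeffs" and a
    unfolding L_def using that by (rule mpoly_eval_pderiv_lipschitz)
  note scales = stratifying_scales_exist[OF assms \<open>0 \<le> L\<close> _ \<open>0 < \<kappa>\<close> \<open>1 \<le> T\<close>
      \<open>G \<le> \<kappa> * T\<close> lower lip]
  show ?thesis
    unfolding sublevel_set_stratified_def[symmetric]
  proof (rule exI[of _ "4 * G"], intro conjI exI[of _ "scale_up (4 * G) A T D"] allI impI)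
    show "1 \<le> 4 * G"
      using \<open>0 \<le> L\<close> by (simp add: G_def)
  qed (rule scales; simp add: G_def)
qed

end
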